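(* Let $X$ be a real random variable with $X\ge 1.5$ almost surely. Assume $X$ has finite variance and is not almost surely constant. Let $\tau\in(0,1]$ and $c\in\mathbb R$ be constants. Then $$\operatorname{Var}\Big(\sqrt{\big(X+\tfrac{\tau}{1+e^{X}}\big)^2+c^2}\Big)<\operatorname{Var}\Big(\sqrt{X^2+c^2}\Big).$$ *)

theory Defs
  imports "HOL-Probability.Probability"
begin

end

theory Submission
  imports Defs
begin

text \<open>
  Put \<open>f x = sqrt (x\<^sup>2 + c\<^sup>2)\<close> and \<open>g x = f (u x)\<close> with \<open>u x = x + \<tau> / (1 + exp x)\<close>.
  On \<open>[3/2, \<infinity>)\<close> both \<open>g\<close> and \<open>f - g\<close> are strictly increasing, so
  \<open>\<bar>g a - g b\<bar> < \<bar>f a - f b\<bar>\<close> whenever \<open>a \<noteq> b\<close>. For \<open>f - g\<close> this comes down to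
  \<open>0 < u' < 1\<close> and \<open>u u' \<le> x\<close>; the latter needs \<open>exp x (x - 1) \<ge> 1\<close>, which is where
  the bound \<open>X \<ge> 3/2\<close> enters. Since \<open>f\<close> maps \<open>[3/2, \<infinity>)\<close> onto \<open>[f (3/2), \<infinity>)\<close>, the mean
  of \<open>f X\<close> is \<open>f y\<close> for some \<open>y \<ge> 3/2\<close>, and then
  \<open>Var (g X) \<le> E (g X - g y)\<^sup>2 < E (f X - f y)\<^sup>2 = Var (f X)\<close>,
  the strict inequality because \<open>X\<close> is not almost surely equal to \<open>y\<close>.
\<close>

definition logistic_shift :: "real \<Rightarrow> real \<Rightarrow> real" where
  "logistic_shift \<tau> x = x + \<tau> / (1 + exp x)"

definition logistic_shift_deriv :: "real \<Rightarrow> real \<Rightarrow> real" where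
  "logistic_shift_deriv \<tau> x = 1 - \<tau> * exp x / (1 + exp x)\<^sup>2"

lemma one_add_exp_pos [simp]:
  fixes x :: real
  shows "0 < 1 + exp x" and "1 + exp x \<noteq> 0"
  using exp_gt_zero[of x] by linarith+

lemma exp_div_one_add_exp_power2_le:
  fixes x :: real
  shows "exp x / (1 + exp x)\<^sup>2 \<le> 1 / 4"
proof -
  have "4 * exp x \<le> (1 + exp x)\<^sup>2"
    using zero_le_power2[of "exp x - 1"] by (simp add: power2_eq_square algebra_simps)
  then show ?thesis by (simp add: field_simps)
qed

lemma logistic_shift_has_real_derivative:
  "(logistic_shift \<tau> has_real_derivative logistic_shift_deriv \<tau> x) (at x)"
  unfolding logistic_shift_def [abs_def] logistic_shift_deriv_def
  by (auto intro!: derivative_eq_intros simp: power2_eq_square)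

lemma logistic_shift_deriv_bounds:
  assumes "0 < \<tau>" "\<tau> < 4"
  shows "0 < logistic_shift_deriv \<tau> x" and "logistic_shift_deriv \<tau> x < 1"
proof -
  have "\<tau> * exp x / (1 + exp x)\<^sup>2 \<le> \<tau> / 4"
    using mult_left_mono[OF exp_div_one_add_exp_power2_le, of \<tau> x] assms(1) by simp
  moreover have "0 < \<tau> * exp x / (1 + exp x)\<^sup>2" using assms(1) by simp
  ultimately show "0 < logistic_shift_deriv \<tau> x" "logistic_shift_deriv \<tau> x < 1"
    using assms(2) unfolding logistic_shift_deriv_def by linarith+
qed

lemma logistic_shift_gt:
  assumes "0 < \<tau>"
  shows "x < logistic_shift \<tau> x"
  using assms by (simp add: logistic_shift_def)

lemma logistic_shift_mult_deriv_le:
  assumes "3/2 \<le> x" "0 \<le> \<tau>"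
  shows "logistic_shift \<tau> x * logistic_shift_deriv \<tau> x \<le> x"
proof -
  define s where "s = exp x"
  define u where "u = logistic_shift \<tau> x"
  have s: "0 < s" "5/2 \<le> s" unfolding s_def using exp_ge_add_one_self[of x] assms(1) by (simp, linarith)
  have "u * logistic_shift_deriv \<tau> x = x - \<tau> / (1 + s) * (s * u / (1 + s) - 1)"
    using s by (simp add: u_def logistic_shift_def logistic_shift_deriv_def s_def field_simps power2_eq_square)
  also have "\<dots> \<le> x"
  proof -
    have "s * (3/2) \<le> s * x" using s assms(1) by (intro mult_left_mono) auto
    moreover have "s * x \<le> s * u"
      using s assms(2) by (intro mult_left_mono) (auto simp: u_def logistic_shift_def)
    ultimately have "1 + s \<le> s * u" using s by linarith
    then have "1 \<le> s * u / (1 + s)" using s by (simp add: field_simps)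
    moreover have "0 \<le> \<tau> / (1 + s)" using s assms(2) by simp
    ultimately have "0 \<le> \<tau> / (1 + s) * (s * u / (1 + s) - 1)" by (intro mult_nonneg_nonneg) simp_all
    then show ?thesis by linarith
  qed
  finally show ?thesis unfolding u_def .
qed

lemma logistic_shift_power2_le:
  assumes "0 \<le> \<tau>" "\<tau> \<le> 1"
  shows "(logistic_shift \<tau> x)\<^sup>2 \<le> 2 * x\<^sup>2 + 2"
proof -
  define d where "d = \<tau> / (1 + exp x)"
  have "\<tau> \<le> 1 + exp x" using exp_gt_zero[of x] assms(2) by linarith
  then have "0 \<le> d" "d \<le> 1" using assms(1) by (simp_all add: d_def)
  then have "d\<^sup>2 \<le> 1" by (simp add: power_le_one)
  moreover have "(x + d)\<^sup>2 \<le> 2 * x\<^sup>2 + 2 * d\<^sup>2"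
    using zero_le_power2[of "x - d"] by (simp add: power2_eq_square algebra_simps)
  ultimately show ?thesis by (simp add: logistic_shift_def flip: d_def)
qed

lemma has_real_derivative_sqrt_power2_add:
  fixes v :: "real \<Rightarrow> real"
  assumes "(v has_real_derivative v') (at x)" and "v x \<noteq> 0"
  shows "((\<lambda>x. sqrt ((v x)\<^sup>2 + c\<^sup>2)) has_real_derivative v x * v' / sqrt ((v x)\<^sup>2 + c\<^sup>2)) (at x)"
proof -
  have "0 < (v x)\<^sup>2 + c\<^sup>2" using assms(2) by (simp add: add_pos_nonneg)
  then show ?thesis
    by (auto intro!: derivative_eq_intros assms(1) simp: field_simps)
qed

lemma deriv_pos_imp_strict_mono_on_atLeast:
  fixes f :: "real \<Rightarrow> real"
  assumes "\<And>x. a \<le> x \<Longrightarrow> (f has_real_derivative f' x) (at x) \<and> 0 < f' x"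
  shows "strict_mono_on {a..} f"
proof (rule strict_mono_onI)
  fix r s assume "r \<in> {a..}" "s \<in> {a..}" "r < s"
  show "f r < f s"
  proof (rule DERIV_pos_imp_increasing[OF \<open>r < s\<close>])
    fix x assume "r \<le> x" "x \<le> s"
    then show "\<exists>y. (f has_real_derivative y) (at x) \<and> 0 < y"
      using assms[of x] \<open>r \<in> {a..}\<close> by auto
  qed
qed

lemma abs_diff_less_if_strict_mono_on:
  fixes f g :: "'a :: linorder \<Rightarrow> real"
  assumes "strict_mono_on S g" and "strict_mono_on S (\<lambda>x. f x - g x)"
    and "a \<in> S" "b \<in> S" "a \<noteq> b"
  shows "\<bar>g a - g b\<bar> < \<bar>f a - f b\<bar>"
proof -
  have *: "\<bar>g r - g s\<bar> < \<bar>f r - f s\<bar>" if "r \<in> S" "s \<in> S" "r < s" for r s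
    using strict_mono_onD[OF assms(1) that] strict_mono_onD[OF assms(2) that] by linarith
  from \<open>a \<noteq> b\<close> consider "a < b" | "b < a" by (rule linorder_neqE)
  then show ?thesis
  proof cases
    case 1 then show ?thesis using *[OF assms(3,4)] by blast
  next
    case 2 then show ?thesis using *[OF assms(4,3)] by (simp add: abs_minus_commute)
  qed
qed

lemma div_sqrt_power2_add_mono:
  fixes a b c :: real
  assumes "0 \<le> a" "a \<le> b"
  shows "a / sqrt (a\<^sup>2 + c\<^sup>2) \<le> b / sqrt (b\<^sup>2 + c\<^sup>2)"
proof (cases "a = 0")
  case False
  then have pos: "0 < sqrt (a\<^sup>2 + c\<^sup>2)" "0 < sqrt (b\<^sup>2 + c\<^sup>2)"
    using assms by (simp_all add: add_pos_nonneg)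
  have "a\<^sup>2 * (b\<^sup>2 + c\<^sup>2) \<le> b\<^sup>2 * (a\<^sup>2 + c\<^sup>2)"
    using assms by (simp add: algebra_simps mult_right_mono power_mono)
  then have "sqrt (a\<^sup>2 * (b\<^sup>2 + c\<^sup>2)) \<le> sqrt (b\<^sup>2 * (a\<^sup>2 + c\<^sup>2))"
    by (rule real_sqrt_le_mono)
  then have "a * sqrt (b\<^sup>2 + c\<^sup>2) \<le> b * sqrt (a\<^sup>2 + c\<^sup>2)"
    using assms by (simp add: real_sqrt_mult)
  then show ?thesis using pos by (simp add: divide_simps mult.commute)
qed (use assms in simp)

lemma mult_div_sqrt_power2_add_less:
  fixes u u' x c :: real
  assumes "0 < u" "0 < u'" "u' < 1" "u * u' \<le> x"
  shows "u * u' / sqrt (u\<^sup>2 + c\<^sup>2) < x / sqrt (x\<^sup>2 + c\<^sup>2)"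
proof -
  have "(u * u')\<^sup>2 < u\<^sup>2"
    using assms(1-3) by (simp add: power_mult_distrib power_less_one_iff mult_less_cancel_left1)
  then have "sqrt ((u * u')\<^sup>2 + c\<^sup>2) < sqrt (u\<^sup>2 + c\<^sup>2)" by simp
  moreover have "0 < sqrt ((u * u')\<^sup>2 + c\<^sup>2)" "0 < u * u'"
    using assms(1,2) by (simp_all add: add_pos_nonneg)
  ultimately have "u * u' / sqrt (u\<^sup>2 + c\<^sup>2) < u * u' / sqrt ((u * u')\<^sup>2 + c\<^sup>2)"
    by (intro divide_strict_left_mono) simp_all
  also have "\<dots> \<le> x / sqrt (x\<^sup>2 + c\<^sup>2)"
    using \<open>0 < u * u'\<close> assms(4) by (intro div_sqrt_power2_add_mono) simp_all
  finally show ?thesis .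
qed

lemma exists_sqrt_power2_add_eq:
  fixes a c m :: real
  assumes "0 \<le> a" "sqrt (a\<^sup>2 + c\<^sup>2) \<le> m"
  shows "\<exists>y \<ge> a. sqrt (y\<^sup>2 + c\<^sup>2) = m"
proof (intro exI conjI)
  have "0 \<le> sqrt (a\<^sup>2 + c\<^sup>2)" by simp
  then have "0 \<le> m" using assms(2) by linarith
  have "a\<^sup>2 + c\<^sup>2 \<le> m\<^sup>2"
    using power_mono[OF assms(2), of 2] by simp
  then show "a \<le> sqrt (m\<^sup>2 - c\<^sup>2)"
    using assms(1) real_sqrt_le_mono[of "a\<^sup>2" "m\<^sup>2 - c\<^sup>2"] by simp
  show "sqrt ((sqrt (m\<^sup>2 - c\<^sup>2))\<^sup>2 + c\<^sup>2) = m"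
  proof -
    have "0 \<le> m\<^sup>2 - c\<^sup>2" using \<open>a\<^sup>2 + c\<^sup>2 \<le> m\<^sup>2\<close> zero_le_power2[of a] by linarith
    then show ?thesis using \<open>0 \<le> m\<close> by simp
  qed
qed

lemma strict_mono_on_sqrt_power2_add_logistic_shift:
  assumes "0 < \<tau>" "\<tau> \<le> 1"
  shows "strict_mono_on {3/2..} (\<lambda>x. sqrt ((logistic_shift \<tau> x)\<^sup>2 + c\<^sup>2))"
    and "strict_mono_on {3/2..} (\<lambda>x. sqrt (x\<^sup>2 + c\<^sup>2) - sqrt ((logistic_shift \<tau> x)\<^sup>2 + c\<^sup>2))"
proof -
  let ?u = "logistic_shift \<tau>" and ?u' = "logistic_shift_deriv \<tau>"
  have u_pos: "0 < ?u x" if "3/2 \<le> x" for x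
    using logistic_shift_gt[OF assms(1), of x] that by linarith
  have u': "0 < ?u' x" "?u' x < 1" for x
    using logistic_shift_deriv_bounds[of \<tau> x] assms by simp_all
  have dg: "((\<lambda>x. sqrt ((?u x)\<^sup>2 + c\<^sup>2)) has_real_derivative ?u x * ?u' x / sqrt ((?u x)\<^sup>2 + c\<^sup>2)) (at x)"
    if "3/2 \<le> x" for x
    using has_real_derivative_sqrt_power2_add[OF logistic_shift_has_real_derivative] u_pos[OF that] by simp
  have df: "((\<lambda>x. sqrt (x\<^sup>2 + c\<^sup>2)) has_real_derivative x / sqrt (x\<^sup>2 + c\<^sup>2)) (at x)"
    if "3/2 \<le> x" for x :: real
    using has_real_derivative_sqrt_power2_add[OF DERIV_ident, of x c] that by simp
  show "strict_mono_on {3/2..} (\<lambda>x. sqrt ((?u x)\<^sup>2 + c\<^sup>2))"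
  proof (rule deriv_pos_imp_strict_mono_on_atLeast[OF conjI[OF dg]])
    fix x :: real assume x: "3/2 \<le> x"
    have "0 < sqrt ((?u x)\<^sup>2 + c\<^sup>2)" using u_pos[OF x] by (simp add: add_pos_nonneg)
    then show "0 < ?u x * ?u' x / sqrt ((?u x)\<^sup>2 + c\<^sup>2)"
      using u_pos[OF x] u'(1)[of x] by simp
  qed
  show "strict_mono_on {3/2..} (\<lambda>x. sqrt (x\<^sup>2 + c\<^sup>2) - sqrt ((?u x)\<^sup>2 + c\<^sup>2))"
  proof (rule deriv_pos_imp_strict_mono_on_atLeast[OF conjI[OF DERIV_diff[OF df dg]]])
    fix x :: real assume x: "3/2 \<le> x"
    show "0 < x / sqrt (x\<^sup>2 + c\<^sup>2) - ?u x * ?u' x / sqrt ((?u x)\<^sup>2 + c\<^sup>2)"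
      using mult_div_sqrt_power2_add_less[OF u_pos[OF x] u' logistic_shift_mult_deriv_le] x assms(1)
      by simp
  qed
qed

lemma (in prob_space) variance_le_expectation_power2_diff:
  fixes Z :: "'a \<Rightarrow> real"
  assumes "integrable M Z" and "integrable M (\<lambda>x. (Z x)\<^sup>2)"
  shows "variance Z \<le> expectation (\<lambda>x. (Z x - k)\<^sup>2)"
proof -
  have "expectation (\<lambda>x. (Z x - k)\<^sup>2) = expectation (\<lambda>x. (Z x)\<^sup>2) - 2 * k * expectation Z + k\<^sup>2"
    using assms by (simp add: power2_diff prob_space)
  moreover have "variance Z = expectation (\<lambda>x. (Z x)\<^sup>2) - (expectation Z)\<^sup>2"
    using variance_eq[OF assms] .
  moreover have "(expectation Z - k)\<^sup>2 = (expectation Z)\<^sup>2 - 2 * k * expectation Z + k\<^sup>2"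
    by (simp add: power2_diff)
  ultimately show ?thesis using zero_le_power2[of "expectation Z - k"] by linarith
qed

lemma (in prob_space) variance_less_if_abs_diff_less:
  fixes X :: "'a \<Rightarrow> 'b" and f g :: "'b \<Rightarrow> real"
  assumes meas: "(\<lambda>\<omega>. f (X \<omega>)) \<in> borel_measurable M" "(\<lambda>\<omega>. g (X \<omega>)) \<in> borel_measurable M"
    and sq_int: "integrable M (\<lambda>\<omega>. (f (X \<omega>))\<^sup>2)" "integrable M (\<lambda>\<omega>. (g (X \<omega>))\<^sup>2)"
    and range: "AE \<omega> in M. X \<omega> \<in> S"
    and nonconst: "\<not> (\<exists>a. AE \<omega> in M. X \<omega> = a)"
    and mean: "y \<in> S" "f y = expectation (\<lambda>\<omega>. f (X \<omega>))"
    and contraction: "\<And>a b. a \<in> S \<Longrightarrow> b \<in> S \<Longrightarrow> a \<noteq> b \<Longrightarrow> \<bar>g a - g b\<bar> < \<bar>f a - f b\<bar>"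
  shows "variance (\<lambda>\<omega>. g (X \<omega>)) < variance (\<lambda>\<omega>. f (X \<omega>))"
proof -
  have int: "integrable M (\<lambda>\<omega>. f (X \<omega>))" "integrable M (\<lambda>\<omega>. g (X \<omega>))"
    using meas sq_int by (auto intro: square_integrable_imp_integrable)
  define D where "D \<omega> = (f (X \<omega>) - f y)\<^sup>2 - (g (X \<omega>) - g y)\<^sup>2" for \<omega>
  have int_f: "integrable M (\<lambda>\<omega>. (f (X \<omega>) - f y)\<^sup>2)"
    and int_g: "integrable M (\<lambda>\<omega>. (g (X \<omega>) - g y)\<^sup>2)"
    using int sq_int by (simp_all add: power2_diff)
  then have int_D: "integrable M D" unfolding D_def by simp
  have D_pos: "0 < D \<omega>" if "X \<omega> \<in> S" "X \<omega> \<noteq> y" for \<omega>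
    using contraction[OF that(1) mean(1) that(2)] unfolding D_def
    by (metis abs_le_square_iff diff_gt_0_iff_gt not_le)
  have D_nonneg: "AE \<omega> in M. 0 \<le> D \<omega>"
    using range by eventually_elim (use D_pos in \<open>force simp: D_def\<close>)
  have "\<not> (AE \<omega> in M. D \<omega> = 0)"
  proof
    assume "AE \<omega> in M. D \<omega> = 0"
    with range have "AE \<omega> in M. X \<omega> = y"
      by eventually_elim (use D_pos in force)
    with nonconst show False by blast
  qed
  then have "0 < integral\<^sup>L M D"
    using integral_nonneg_eq_0_iff_AE[OF int_D D_nonneg] integral_nonneg_AE[OF D_nonneg] by linarith
  then have "expectation (\<lambda>\<omega>. (g (X \<omega>) - g y)\<^sup>2) < expectation (\<lambda>\<omega>. (f (X \<omega>) - f y)\<^sup>2)"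
    using int_f int_g unfolding D_def by simp
  also have "\<dots> = variance (\<lambda>\<omega>. f (X \<omega>))" using mean(2) by simp
  finally show ?thesis
    using variance_le_expectation_power2_diff[OF int(2) sq_int(2), where k="g y"] by linarith
qed

lemma (in prob_space) integrable_power2_logistic_shift:
  assumes [measurable]: "X \<in> borel_measurable M"
    and "integrable M (\<lambda>\<omega>. (X \<omega>)\<^sup>2)" and "0 \<le> \<tau>" "\<tau> \<le> 1"
  shows "integrable M (\<lambda>\<omega>. (logistic_shift \<tau> (X \<omega>))\<^sup>2)"
proof (rule Bochner_Integration.integrable_bound)
  show "integrable M (\<lambda>\<omega>. 2 * (X \<omega>)\<^sup>2 + 2)" using assms(2) by simp
  show "AE \<omega> in M. norm ((logistic_shift \<tau> (X \<omega>))\<^sup>2) \<le> norm (2 * (X \<omega>)\<^sup>2 + 2)"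
    using logistic_shift_power2_le[OF assms(3,4)] by simp
qed (unfold logistic_shift_def, measurable)

theorem lemma4:
  fixes M :: "'a measure" and X :: "'a \<Rightarrow> real" and \<tau> c :: real
  assumes "prob_space M"
    and "X \<in> borel_measurable M"
    and "AE \<omega> in M. X \<omega> \<ge> 1.5"
    and "integrable M (\<lambda>\<omega>. (X \<omega>)\<^sup>2)"
    and "\<not> (\<exists>a. AE \<omega> in M. X \<omega> = a)"
    and "0 < \<tau>" and "\<tau> \<le> 1"
  shows "prob_space.variance M (\<lambda>\<omega>. sqrt ((X \<omega> + \<tau> / (1 + exp (X \<omega>)))\<^sup>2 + c\<^sup>2))
         < prob_space.variance M (\<lambda>\<omega>. sqrt ((X \<omega>)\<^sup>2 + c\<^sup>2))"
proof -
  interpret prob_space M by (rule assms(1))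
  note [measurable] = assms(2)
  define f where "f x = sqrt (x\<^sup>2 + c\<^sup>2)" for x :: real
  define g where "g x = sqrt ((logistic_shift \<tau> x)\<^sup>2 + c\<^sup>2)" for x
  have range: "AE \<omega> in M. X \<omega> \<in> {3/2..}" using assms(3) by simp
  have meas: "(\<lambda>\<omega>. f (X \<omega>)) \<in> borel_measurable M" "(\<lambda>\<omega>. g (X \<omega>)) \<in> borel_measurable M"
    unfolding f_def g_def logistic_shift_def by measurable
  have sq_int: "integrable M (\<lambda>\<omega>. (f (X \<omega>))\<^sup>2)" "integrable M (\<lambda>\<omega>. (g (X \<omega>))\<^sup>2)"
    using assms(4) integrable_power2_logistic_shift[OF assms(2,4)] assms(6,7) by (simp_all add: f_def g_def)
  have "AE \<omega> in M. f (3/2) \<le> f (X \<omega>)"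
    using range by eventually_elim (simp add: f_def power_mono)
  then have "f (3/2) \<le> expectation (\<lambda>\<omega>. f (X \<omega>))"
    by (rule integral_ge_const[OF square_integrable_imp_integrable[OF meas(1) sq_int(1)]])
  then obtain y where "y \<in> {3/2..}" "f y = expectation (\<lambda>\<omega>. f (X \<omega>))"
    using exists_sqrt_power2_add_eq[of "3/2" c] unfolding f_def by auto
  moreover have "\<bar>g a - g b\<bar> < \<bar>f a - f b\<bar>" if "a \<in> {3/2..}" "b \<in> {3/2..}" "a \<noteq> b" for a b
    using abs_diff_less_if_strict_mono_on[OF strict_mono_on_sqrt_power2_add_logistic_shift[OF assms(6,7)] that]
    unfolding f_def g_def .
  ultimately have "variance (\<lambda>\<omega>. g (X \<omega>)) < variance (\<lambda>\<omega>. f (X \<omega>))"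
    by (rule variance_less_if_abs_diff_less[OF meas sq_int range assms(5)])
  then show ?thesis unfolding f_def g_def logistic_shift_def .
qed

end
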